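(* Let $T$ be a complete o-minimal theory expanding the theory of real closed ordered fields, let $(\mathbb{U},\mathcal{O})\models T_{\mathrm{convex}}$, let $(\mathbb{E}_i)_{i<\lambda}$ be an increasing sequence of elementary substructures of $\mathbb{U}$ (as models of $T$), and let $\mathbb{E}_\lambda:=\bigcup_{i<\lambda}\mathbb{E}_i$. If $y\in\mathbb{U}$ is weakly immediate over $\mathbb{E}_i$ for all $i<\lambda$, then $y$ is weakly immediate over $\mathbb{E}_\lambda$.
   Context: $T_{\mathrm{convex}}$ is the theory of pairs $(\mathbb{U},\mathcal{O})$ with $\mathbb{U}\models T$ and $\mathcal{O}\ne\mathbb{U}$ a convex subring closed under all continuous $\emptyset$-definable functions. For $\mathbb{F}\subseteq\mathbb{U}$, $y$ is weakly immediate over $\mathbb{F}$ if $\{\mathrm{val}_{\mathcal{O}}(y-c):c\in\mathbb{F}\}$ has no maximum. *)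

theory Defs
  imports Main "HOL-Computational_Algebra.Polynomial"
begin

definition subfield :: "'a::field set \<Rightarrow> bool" where
  "subfield K \<longleftrightarrow> 0 \<in> K \<and> 1 \<in> K \<and>
     (\<forall>x\<in>K. \<forall>y\<in>K. x + y \<in> K \<and> x * y \<in> K \<and> - x \<in> K) \<and>
     (\<forall>x\<in>K. x \<noteq> 0 \<longrightarrow> inverse x \<in> K)"

definition real_closed_subfield :: "'a::linordered_field set \<Rightarrow> bool" where
  "real_closed_subfield K \<longleftrightarrow> subfield K \<and>
     (\<forall>x\<in>K. 0 \<le> x \<longrightarrow> (\<exists>r\<in>K. r * r = x)) \<and>
     (\<forall>p. (\<forall>i. coeff p i \<in> K) \<and> odd (degree p) \<longrightarrow> (\<exists>r\<in>K. poly p r = 0))"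

definition convex_subring :: "'a::linordered_field set \<Rightarrow> bool" where
  "convex_subring Ov \<longleftrightarrow> 0 \<in> Ov \<and> 1 \<in> Ov \<and>
     (\<forall>x\<in>Ov. \<forall>y\<in>Ov. x + y \<in> Ov \<and> x * y \<in> Ov \<and> - x \<in> Ov) \<and>
     (\<forall>x\<in>Ov. \<forall>z. \<bar>z\<bar> \<le> \<bar>x\<bar> \<longrightarrow> z \<in> Ov)"

text \<open>The valuation induced by Ov: val a \<le> val b iff b \<in> a Ov.
  (So val 0 = \<infinity> is the largest value.) val_O a = the class of a.\<close>
definition val_le :: "'a::linordered_field set \<Rightarrow> 'a \<Rightarrow> 'a \<Rightarrow> bool" where
  "val_le Ov a b \<longleftrightarrow> (\<exists>u\<in>Ov. b = a * u)"

definition val :: "'a::linordered_field set \<Rightarrow> 'a \<Rightarrow> 'a set" where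
  "val Ov a = {b. val_le Ov a b \<and> val_le Ov b a}"

definition val_group_le :: "'a::linordered_field set \<Rightarrow> 'a set \<Rightarrow> 'a set \<Rightarrow> bool" where
  "val_group_le Ov v w \<longleftrightarrow> (\<exists>a b. v = val Ov a \<and> w = val Ov b \<and> val_le Ov a b)"

definition weakly_immediate :: "'a::linordered_field set \<Rightarrow> 'a set \<Rightarrow> 'a \<Rightarrow> bool" where
  "weakly_immediate Ov F y \<longleftrightarrow>
     \<not> (\<exists>m\<in>(\<lambda>c. val Ov (y - c)) ` F. \<forall>v\<in>(\<lambda>c. val Ov (y - c)) ` F. val_group_le Ov v m)"

end

theory Submission
  imports Defs
begin

text \<open>A maximum of the values val(y - c), c in the union, is attained at some c lying in
  a single E i, and it dominates in particular the values over E i, so it is a maximum there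
  too.\<close>

lemma weakly_immediate_UN:
  assumes "\<And>i. i \<in> I \<Longrightarrow> weakly_immediate Ov (E i) y"
  shows "weakly_immediate Ov (\<Union>i\<in>I. E i) y"
  unfolding weakly_immediate_def
proof
  assume "\<exists>m\<in>(\<lambda>c. val Ov (y - c)) ` (\<Union>i\<in>I. E i).
            \<forall>v\<in>(\<lambda>c. val Ov (y - c)) ` (\<Union>i\<in>I. E i). val_group_le Ov v m"
  then obtain i c where i: "i \<in> I" and c: "c \<in> E i"
    and max: "\<forall>v\<in>(\<lambda>c. val Ov (y - c)) ` (\<Union>i\<in>I. E i). val_group_le Ov v (val Ov (y - c))"
    by blast
  from max i have "\<forall>v\<in>(\<lambda>c. val Ov (y - c)) ` E i. val_group_le Ov v (val Ov (y - c))"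
    by blast
  with c have "\<not> weakly_immediate Ov (E i) y"
    unfolding weakly_immediate_def by blast
  with assms i show False
    by blast
qed

theorem lemma3p21:
  fixes Ov :: "'a::linordered_field set"
    and E :: "'i::wellorder \<Rightarrow> 'a set"
    and lam :: "'i"
    and y :: 'a
  assumes U_rcf: "real_closed_subfield (UNIV :: 'a set)"
    and O_conv: "convex_subring Ov"
    and O_proper: "Ov \<noteq> UNIV"
    and E_rcf: "\<And>i. i < lam \<Longrightarrow> real_closed_subfield (E i)"
    and E_incr: "\<And>i j. i \<le> j \<Longrightarrow> j < lam \<Longrightarrow> E i \<subseteq> E j"
    and wi: "\<And>i. i < lam \<Longrightarrow> weakly_immediate Ov (E i) y"
  shows "weakly_immediate Ov (\<Union>i\<in>{i. i < lam}. E i) y"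
  using wi by (intro weakly_immediate_UN) simp

end
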